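(* Let $q$ be a prime power, $n\ge 2$, $\lambda$ a nontrivial additive character of $\mathbb{F}_q$, and $x\in\mathbb{F}_q^*$. Then \[ \left|\sum_{\alpha_1,\ldots,\alpha_{n-1}\in\mathbb{F}_q^*}\lambda\!\left(\alpha_1+\cdots+\alpha_{n-1}+\frac{x}{\alpha_1\cdots\alpha_{n-1}}\right)\right| \le \left(1-\frac{1}{q-1}\right)q^{n/2}+\frac{1}{q-1}. \] *)

theory Defs
  imports Complex_Main "HOL-Library.FuncSet"
begin

definition additive_character :: "('a::{field,finite} \<Rightarrow> complex) \<Rightarrow> bool" where
  "additive_character \<psi> \<longleftrightarrow>
     (\<forall>a b. \<psi> (a + b) = \<psi> a * \<psi> b) \<and> (\<forall>a. norm (\<psi> a) = 1)"

definition nontrivial_character :: "('a::{field,finite} \<Rightarrow> complex) \<Rightarrow> bool" where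
  "nontrivial_character \<psi> \<longleftrightarrow> (\<exists>a. \<psi> a \<noteq> 1)"

end

theory Submission
  imports Defs "HOL-Library.Cardinality" "HOL-Analysis.Convex"
begin

text \<open>Write K m for the sum over m = n - 1 variables (\<open>kloosterman_sum\<close>) and
  T f x = \<open>\<Sum>u \<noteq> 0. \<psi> (x / u) * f u\<close> (\<open>kloosterman_transform\<close>). Splitting off the last
  variable gives K (m + 1) = T (K m) on nonzero arguments. By orthogonality of characters,
  T multiplies the squared \<open>\<ell>\<^sup>2\<close>-norm on \<open>\<bbbF>\<^sub>q\<^sup>*\<close> of a function with vanishing sum by q,
  and maps a constant c to -c. Hence G m = K m + (-1)^m/(q - 1) has vanishing sum,
  G (m + 1) = T (G m), and the squared norm of G m is q^(m+1) (q - 2)/(q - 1).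
  A function with vanishing sum over N points satisfies N |g x|^2 \<le> (N - 1) \<Sum>|g|^2
  (Cauchy-Schwarz on the other N - 1 values); for N = q - 1 this gives
  |G m x| \<le> (1 - 1/(q - 1)) q^((m+1)/2), and the triangle inequality concludes.\<close>

lemma norm_sq_le_of_sum_eq_0:
  fixes g :: "'b \<Rightarrow> 'c::real_normed_vector"
  assumes "finite A" "x \<in> A" "(\<Sum>y\<in>A. g y) = 0"
  shows "real (card A) * (norm (g x))\<^sup>2 \<le> (real (card A) - 1) * (\<Sum>y\<in>A. (norm (g y))\<^sup>2)"
proof -
  have "card A \<ge> 1"
    using assms(1,2) by (metis One_nat_def Suc_leI card_gt_0_iff empty_iff)
  have "g x = - (\<Sum>y\<in>A - {x}. g y)"
    using assms by (simp add: sum.remove add_eq_0_iff2)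
  then have "norm (g x) \<le> (\<Sum>y\<in>A - {x}. norm (g y))"
    by (simp add: norm_sum)
  then have "(norm (g x))\<^sup>2 \<le> (\<Sum>y\<in>A - {x}. norm (g y))\<^sup>2"
    by (simp add: power_mono)
  also have "\<dots> \<le> (\<Sum>y\<in>A - {x}. (norm (g y))\<^sup>2) * card (A - {x})"
    by (rule sum_squared_le_sum_of_squares)
  also have "\<dots> = ((\<Sum>y\<in>A. (norm (g y))\<^sup>2) - (norm (g x))\<^sup>2) * (real (card A) - 1)"
    using assms \<open>card A \<ge> 1\<close> by (simp add: sum_diff1 of_nat_diff)
  finally show ?thesis
    by (simp add: algebra_simps)
qed

lemma two_le_card_field: "2 \<le> CARD('a::{field,finite})"
proof -
  have "card {0::'a, 1} \<le> CARD('a)"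
    by (rule card_mono) auto
  then show ?thesis
    by simp
qed

lemma power2_powr_half:
  fixes x :: real
  assumes "0 < x"
  shows "(x powr (real k / 2))\<^sup>2 = x ^ k"
proof -
  have "(x powr (real k / 2))\<^sup>2 = x powr real k"
    using assms by (simp add: powr_power)
  then show ?thesis
    using assms by (simp add: powr_realpow)
qed

lemma sum_nonzero_reindex_divide:
  fixes x :: "'a::{field,finite}"
  assumes "x \<noteq> 0"
  shows "(\<Sum>u\<in>UNIV - {0}. h (x / u)) = (\<Sum>u\<in>UNIV - {0}. h u)"
  using assms by (intro sum.reindex_bij_witness[where i="\<lambda>u. x / u" and j="\<lambda>u. x / u"]) auto

lemma additive_character_add:
  assumes "additive_character \<psi>"
  shows "\<psi> (a + b) = \<psi> a * \<psi> b"
  using assms unfolding additive_character_def by blast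

lemma additive_character_zero:
  assumes "additive_character \<psi>"
  shows "\<psi> 0 = 1"
proof -
  have "\<psi> 0 = \<psi> 0 * \<psi> 0" "\<psi> 0 \<noteq> 0"
    using assms unfolding additive_character_def by (metis add_0, metis norm_zero zero_neq_one)
  then show ?thesis
    by (metis mult_cancel_left1)
qed

lemma additive_character_minus:
  assumes "additive_character \<psi>"
  shows "\<psi> (- a) = cnj (\<psi> a)"
proof -
  have "\<psi> a * \<psi> (- a) = 1"
    using assms additive_character_zero[OF assms] unfolding additive_character_def
    by (metis add.right_inverse)
  moreover have "\<psi> a * cnj (\<psi> a) = 1"
    using assms unfolding additive_character_def by (metis complex_norm_square of_real_1 power_one)
  ultimately show ?thesis
    by (metis mult_left_cancel mult_zero_left zero_neq_one)
qed

definition kloosterman_sum :: "('a::{field,finite} \<Rightarrow> complex) \<Rightarrow> nat \<Rightarrow> 'a \<Rightarrow> complex" where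
  "kloosterman_sum \<psi> m x =
     (\<Sum>\<alpha> \<in> PiE {..<m} (\<lambda>_. UNIV - {0}). \<psi> ((\<Sum>i<m. \<alpha> i) + x / (\<Prod>i<m. \<alpha> i)))"

definition kloosterman_transform ::
    "('a::{field,finite} \<Rightarrow> complex) \<Rightarrow> ('a \<Rightarrow> complex) \<Rightarrow> 'a \<Rightarrow> complex" where
  "kloosterman_transform \<psi> f x = (\<Sum>u\<in>UNIV - {0}. \<psi> (x / u) * f u)"

lemma kloosterman_sum_0: "kloosterman_sum \<psi> 0 x = \<psi> x"
  unfolding kloosterman_sum_def by simp

lemma kloosterman_sum_Suc:
  fixes \<psi> :: "'a::{field,finite} \<Rightarrow> complex"
  assumes "additive_character \<psi>"
  shows "kloosterman_sum \<psi> (Suc m) x = (\<Sum>a\<in>UNIV - {0}. \<psi> a * kloosterman_sum \<psi> m (x / a))"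
proof -
  let ?N = "UNIV - {0::'a}"
  let ?F = "\<lambda>\<alpha>. \<psi> ((\<Sum>i<Suc m. \<alpha> i) + x / (\<Prod>i<Suc m. \<alpha> i))"
  have split_last: "?F (\<beta>(m := a)) = \<psi> a * \<psi> ((\<Sum>i<m. \<beta> i) + (x / a) / (\<Prod>i<m. \<beta> i))"
    for a and \<beta> :: "nat \<Rightarrow> 'a"
  proof -
    have "(\<Sum>i<m. (\<beta>(m := a)) i) = (\<Sum>i<m. \<beta> i)" "(\<Prod>i<m. (\<beta>(m := a)) i) = (\<Prod>i<m. \<beta> i)"
      by (auto intro: sum.cong prod.cong)
    then have "?F (\<beta>(m := a)) = \<psi> (a + ((\<Sum>i<m. \<beta> i) + (x / a) / (\<Prod>i<m. \<beta> i)))"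
      by (simp add: ac_simps)
    then show ?thesis
      by (simp add: additive_character_add[OF assms])
  qed
  have "PiE {..<Suc m} (\<lambda>_. ?N) = (\<lambda>(a, \<beta>). \<beta>(m := a)) ` (?N \<times> PiE {..<m} (\<lambda>_. ?N))"
    by (simp only: lessThan_Suc PiE_insert_eq)
  then have "kloosterman_sum \<psi> (Suc m) x = (\<Sum>(a, \<beta>)\<in>?N \<times> PiE {..<m} (\<lambda>_. ?N). ?F (\<beta>(m := a)))"
    unfolding kloosterman_sum_def
    by (intro sum.reindex_cong[where l="\<lambda>(a, \<beta>). \<beta>(m := a)"] inj_combinator) auto
  also have "\<dots> = (\<Sum>a\<in>?N. \<Sum>\<beta>\<in>PiE {..<m} (\<lambda>_. ?N). ?F (\<beta>(m := a)))"
    by (rule sum.cartesian_product[symmetric])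
  also have "\<dots> = (\<Sum>a\<in>?N. \<psi> a * kloosterman_sum \<psi> m (x / a))"
    unfolding split_last kloosterman_sum_def by (simp add: sum_distrib_left)
  finally show ?thesis .
qed

lemma kloosterman_transform_add:
  "kloosterman_transform \<psi> (\<lambda>y. f y + g y) x = kloosterman_transform \<psi> f x + kloosterman_transform \<psi> g x"
  unfolding kloosterman_transform_def by (simp add: distrib_left sum.distrib)

lemma kloosterman_sum_Suc_eq_transform:
  assumes "additive_character \<psi>" "x \<noteq> 0"
  shows "kloosterman_sum \<psi> (Suc m) x = kloosterman_transform \<psi> (kloosterman_sum \<psi> m) x"
proof -
  have "kloosterman_sum \<psi> (Suc m) x = (\<Sum>u\<in>UNIV - {0}. \<psi> (x / u) * kloosterman_sum \<psi> m (x / (x / u)))"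
    unfolding kloosterman_sum_Suc[OF assms(1)] by (rule sum_nonzero_reindex_divide[OF assms(2), symmetric])
  then show ?thesis
    unfolding kloosterman_transform_def using assms(2) by simp
qed

lemma kloosterman_transform_mult_cnj:
  assumes "additive_character \<psi>"
  shows "kloosterman_transform \<psi> f x * cnj (kloosterman_transform \<psi> f x)
    = (\<Sum>u\<in>UNIV - {0}. \<Sum>v\<in>UNIV - {0}. f u * cnj (f v) * \<psi> (x * (1 / u - 1 / v)))"
proof -
  have "\<psi> (x * (1 / u - 1 / v)) = \<psi> (x / u) * cnj (\<psi> (x / v))" for u v
  proof -
    have "\<psi> (x * (1 / u - 1 / v)) = \<psi> (x / u + - (x / v))"
      by (simp add: algebra_simps)
    also have "\<dots> = \<psi> (x / u) * \<psi> (- (x / v))"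
      by (rule additive_character_add[OF assms])
    finally show ?thesis
      by (simp add: additive_character_minus[OF assms])
  qed
  then show ?thesis
    unfolding kloosterman_transform_def cnj_sum sum_product by (simp add: ac_simps)
qed

definition shifted_kloosterman_sum :: "('a::{field,finite} \<Rightarrow> complex) \<Rightarrow> nat \<Rightarrow> 'a \<Rightarrow> complex" where
  "shifted_kloosterman_sum \<psi> m y =
     kloosterman_sum \<psi> m y + complex_of_real ((- 1) ^ m / (real CARD('a) - 1))"

locale nontrivial_additive_character =
  fixes \<psi> :: "'a::{field,finite} \<Rightarrow> complex"
  assumes additive: "additive_character \<psi>"
    and nontrivial: "nontrivial_character \<psi>"
begin

lemma sum_UNIV_eq_0: "(\<Sum>b\<in>UNIV. \<psi> b) = 0"
proof -
  obtain a where a: "\<psi> a \<noteq> 1"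
    using nontrivial unfolding nontrivial_character_def by blast
  have "(\<Sum>b\<in>UNIV. \<psi> b) = (\<Sum>b\<in>UNIV. \<psi> (a + b))"
    by (rule sum.reindex_bij_witness[where i="\<lambda>b. a + b" and j="\<lambda>b. b - a"]) auto
  also have "\<dots> = \<psi> a * (\<Sum>b\<in>UNIV. \<psi> b)"
    by (simp add: additive_character_add[OF additive] sum_distrib_left)
  finally show ?thesis
    using a by (metis mult_cancel_right1)
qed

lemma sum_nonzero_mult:
  "(\<Sum>y\<in>UNIV - {0}. \<psi> (y * c)) = (if c = 0 then of_nat CARD('a) - 1 else - 1)"
proof (cases "c = 0")
  case True
  then show ?thesis
    using additive_character_zero[OF additive] by (simp add: card_Diff_singleton of_nat_diff)
next
  case False
  have "(\<Sum>y\<in>UNIV. \<psi> (y * c)) = (\<Sum>b\<in>UNIV. \<psi> b)"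
    using False by (intro sum.reindex_bij_witness[where i="\<lambda>b. b / c" and j="\<lambda>b. b * c"]) auto
  moreover have "(\<Sum>y\<in>UNIV. \<psi> (y * c)) = \<psi> (0 * c) + (\<Sum>y\<in>UNIV - {0}. \<psi> (y * c))"
    by (rule sum.remove) auto
  ultimately show ?thesis
    using False additive_character_zero[OF additive] sum_UNIV_eq_0 by (simp add: add_eq_0_iff)
qed

lemma sum_nonzero: "(\<Sum>y\<in>UNIV - {0}. \<psi> y) = - 1"
  using sum_nonzero_mult[of 1] by simp

lemma kloosterman_transform_const:
  assumes "x \<noteq> 0"
  shows "kloosterman_transform \<psi> (\<lambda>_. c) x = - c"
  unfolding kloosterman_transform_def sum_distrib_right[symmetric]
    sum_nonzero_reindex_divide[OF assms] sum_nonzero by simp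

lemma sum_kloosterman_transform:
  "(\<Sum>x\<in>UNIV - {0}. kloosterman_transform \<psi> f x) = - (\<Sum>u\<in>UNIV - {0}. f u)"
proof -
  have "(\<Sum>x\<in>UNIV - {0}. kloosterman_transform \<psi> f x)
      = (\<Sum>u\<in>UNIV - {0}. (\<Sum>x\<in>UNIV - {0}. \<psi> (x * (1 / u))) * f u)"
    unfolding kloosterman_transform_def sum_distrib_right by (subst sum.swap) simp
  also have "\<dots> = (\<Sum>u\<in>UNIV - {0}. - f u)"
    by (intro sum.cong refl) (simp only: sum_nonzero_mult, simp)
  finally show ?thesis
    by (simp add: sum_negf)
qed

lemma sum_norm_kloosterman_transform:
  "(\<Sum>x\<in>UNIV - {0}. (norm (kloosterman_transform \<psi> f x))\<^sup>2)
     = CARD('a) * (\<Sum>u\<in>UNIV - {0}. (norm (f u))\<^sup>2) - (norm (\<Sum>u\<in>UNIV - {0}. f u))\<^sup>2"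
proof -
  let ?N = "UNIV - {0::'a}"
  let ?q = "of_nat CARD('a) :: complex"
  have "(\<Sum>x\<in>?N. kloosterman_transform \<psi> f x * cnj (kloosterman_transform \<psi> f x))
      = (\<Sum>x\<in>?N. \<Sum>u\<in>?N. \<Sum>v\<in>?N. f u * cnj (f v) * \<psi> (x * (1 / u - 1 / v)))"
    by (simp only: kloosterman_transform_mult_cnj[OF additive])
  also have "\<dots> = (\<Sum>u\<in>?N. \<Sum>v\<in>?N. \<Sum>x\<in>?N. f u * cnj (f v) * \<psi> (x * (1 / u - 1 / v)))"
    by (subst sum.swap) (intro sum.cong refl sum.swap)
  also have "\<dots> = (\<Sum>u\<in>?N. \<Sum>v\<in>?N. f u * cnj (f v) * (if u = v then ?q - 1 else - 1))"
  proof (intro sum.cong refl)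
    fix u v :: 'a
    assume "u \<in> ?N" "v \<in> ?N"
    then have "(1 / u - 1 / v = 0) = (u = v)"
      by (auto simp: field_simps)
    then show "(\<Sum>x\<in>?N. f u * cnj (f v) * \<psi> (x * (1 / u - 1 / v)))
        = f u * cnj (f v) * (if u = v then ?q - 1 else - 1)"
      by (simp add: sum_distrib_left[symmetric] sum_nonzero_mult)
  qed
  also have "\<dots> = (\<Sum>u\<in>?N. \<Sum>v\<in>?N. (if u = v then ?q * (f u * cnj (f v)) else 0) - f u * cnj (f v))"
    by (intro sum.cong refl) (simp add: algebra_simps)
  also have "\<dots> = ?q * (\<Sum>u\<in>?N. f u * cnj (f u)) - (\<Sum>u\<in>?N. \<Sum>v\<in>?N. f u * cnj (f v))"
    by (simp add: sum_subtractf sum_distrib_left)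
  also have "(\<Sum>u\<in>?N. \<Sum>v\<in>?N. f u * cnj (f v)) = (\<Sum>u\<in>?N. f u) * cnj (\<Sum>v\<in>?N. f v)"
    by (simp add: sum_product)
  finally show ?thesis
    by (simp only: of_real_eq_iff[where 'a=complex, symmetric] of_real_sum of_real_diff
        of_real_mult complex_norm_square) simp
qed

lemma shifted_kloosterman_sum_Suc:
  assumes "y \<noteq> 0"
  shows "shifted_kloosterman_sum \<psi> (Suc m) y = kloosterman_transform \<psi> (shifted_kloosterman_sum \<psi> m) y"
  using kloosterman_sum_Suc_eq_transform[OF additive assms] kloosterman_transform_const[OF assms]
  by (simp add: shifted_kloosterman_sum_def[abs_def] kloosterman_transform_add)

lemma sum_shifted_kloosterman_sum: "(\<Sum>y\<in>UNIV - {0}. shifted_kloosterman_sum \<psi> m y) = 0"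
proof (induction m)
  case 0
  have "real CARD('a) - 1 \<noteq> 0"
    using two_le_card_field[where 'a='a] by simp
  then show ?case
    by (simp add: shifted_kloosterman_sum_def kloosterman_sum_0 sum.distrib sum_nonzero
        card_Diff_singleton of_nat_diff)
next
  case (Suc m)
  have "(\<Sum>y\<in>UNIV - {0}. shifted_kloosterman_sum \<psi> (Suc m) y)
      = (\<Sum>y\<in>UNIV - {0}. kloosterman_transform \<psi> (shifted_kloosterman_sum \<psi> m) y)"
    by (intro sum.cong refl) (simp add: shifted_kloosterman_sum_Suc)
  then show ?case
    by (simp add: sum_kloosterman_transform Suc.IH)
qed

lemma sum_norm_shifted_kloosterman_sum:
  "(\<Sum>y\<in>UNIV - {0}. (norm (shifted_kloosterman_sum \<psi> m y))\<^sup>2)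
     = real CARD('a) ^ Suc m * (real CARD('a) - 2) / (real CARD('a) - 1)"
proof (induction m)
  case 0
  let ?q = "real CARD('a)"
  let ?r = "1 / (?q - 1)"
  have q: "?q \<ge> 2"
    using two_le_card_field[where 'a='a] by simp
  have "(norm (shifted_kloosterman_sum \<psi> 0 y))\<^sup>2 = 1 + 2 * ?r * Re (\<psi> y) + ?r\<^sup>2" for y
  proof -
    have "(Re (\<psi> y))\<^sup>2 + (Im (\<psi> y))\<^sup>2 = 1"
      using additive unfolding additive_character_def by (metis cmod_power2 power_one)
    then show ?thesis
      by (simp add: shifted_kloosterman_sum_def kloosterman_sum_0 cmod_power2 power2_sum
          algebra_simps)
  qed
  then have "(\<Sum>y\<in>UNIV - {0}. (norm (shifted_kloosterman_sum \<psi> 0 y))\<^sup>2)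
      = (?q - 1) * (1 + ?r\<^sup>2) + 2 * ?r * Re (\<Sum>y\<in>UNIV - {0}. \<psi> y)"
    using q by (simp add: sum.distrib sum_distrib_left card_Diff_singleton of_nat_diff algebra_simps)
  also have "\<dots> = ?q ^ Suc 0 * (?q - 2) / (?q - 1)"
    using q by (simp add: sum_nonzero power2_eq_square divide_simps) (simp add: algebra_simps)
  finally show ?case .
next
  case (Suc m)
  have "(\<Sum>y\<in>UNIV - {0}. (norm (shifted_kloosterman_sum \<psi> (Suc m) y))\<^sup>2)
      = (\<Sum>y\<in>UNIV - {0}. (norm (kloosterman_transform \<psi> (shifted_kloosterman_sum \<psi> m) y))\<^sup>2)"
    by (intro sum.cong refl) (simp add: shifted_kloosterman_sum_Suc)
  then show ?case
    by (simp add: sum_norm_kloosterman_transform sum_shifted_kloosterman_sum Suc.IH)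
qed

lemma norm_shifted_kloosterman_sum_le:
  assumes "x \<noteq> 0"
  shows "norm (shifted_kloosterman_sum \<psi> m x)
    \<le> (1 - 1 / (real CARD('a) - 1)) * real CARD('a) powr (real (Suc m) / 2)"
proof -
  let ?q = "real CARD('a)"
  let ?B = "(1 - 1 / (?q - 1)) * ?q powr (real (Suc m) / 2)"
  have q: "?q \<ge> 2"
    using two_le_card_field[where 'a='a] by simp
  have "real (card (UNIV - {0::'a})) = ?q - 1"
    using q by (simp add: card_Diff_singleton of_nat_diff)
  then have "(?q - 1) * (norm (shifted_kloosterman_sum \<psi> m x))\<^sup>2
      \<le> (?q - 2) * (\<Sum>y\<in>UNIV - {0}. (norm (shifted_kloosterman_sum \<psi> m y))\<^sup>2)"
    using norm_sq_le_of_sum_eq_0[OF _ _ sum_shifted_kloosterman_sum, of x] assms by simp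
  also have "\<dots> = (?q - 1) * ?B\<^sup>2"
  proof -
    have "(?q powr (real (Suc m) / 2))\<^sup>2 = ?q ^ Suc m"
      using q by (intro power2_powr_half) simp
    moreover have "1 - 1 / (?q - 1) = (?q - 2) / (?q - 1)"
      using q by (simp add: field_simps)
    ultimately have B: "?B\<^sup>2 = ((?q - 2) / (?q - 1))\<^sup>2 * ?q ^ Suc m"
      by (simp only: power_mult_distrib)
    show ?thesis
      unfolding sum_norm_shifted_kloosterman_sum B using q by (simp add: power2_eq_square)
  qed
  finally have "(norm (shifted_kloosterman_sum \<psi> m x))\<^sup>2 \<le> ?B\<^sup>2"
    using q by simp
  then show ?thesis
    by (rule power2_le_imp_le) (use q in simp)
qed

end

theorem corollary1:
  fixes \<psi> :: "'a::{field,finite} \<Rightarrow> complex" and n :: nat and x :: 'a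
  assumes "n \<ge> 2"
    and "additive_character \<psi>" and "nontrivial_character \<psi>"
    and "x \<noteq> 0"
  shows "norm (\<Sum>\<alpha> \<in> PiE {..<n-1} (\<lambda>_. UNIV - {0}).
            \<psi> ((\<Sum>i<n-1. \<alpha> i) + x / (\<Prod>i<n-1. \<alpha> i)))
         \<le> (1 - 1 / (real (card (UNIV::'a set)) - 1)) * real (card (UNIV::'a set)) powr (real n / 2)
            + 1 / (real (card (UNIV::'a set)) - 1)"
proof -
  interpret nontrivial_additive_character \<psi>
    using assms(2,3) by unfold_locales
  define m where "m = n - 1"
  have n: "n = Suc m"
    using assms(1) unfolding m_def by simp
  have "kloosterman_sum \<psi> m x
      = shifted_kloosterman_sum \<psi> m x - complex_of_real ((- 1) ^ m / (real CARD('a) - 1))"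
    unfolding shifted_kloosterman_sum_def by simp
  then have "norm (kloosterman_sum \<psi> m x)
      \<le> norm (shifted_kloosterman_sum \<psi> m x) + norm (complex_of_real ((- 1) ^ m / (real CARD('a) - 1)))"
    by (metis norm_triangle_ineq4)
  also have "norm (complex_of_real ((- 1) ^ m / (real CARD('a) - 1))) = 1 / (real CARD('a) - 1)"
    unfolding norm_of_real using two_le_card_field[where 'a='a] by (simp add: power_abs)
  finally show ?thesis
    using norm_shifted_kloosterman_sum_le[OF assms(4), of m]
    unfolding kloosterman_sum_def m_def[symmetric] n by simp
qed

end
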